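(* (1) Let $(\mathcal T,(N_A,R_A),(N_B,R_B),\mathbb C,\xi)$ be an object of $\mathrm{RArr}(\mathcal A,\mathcal B)$, i.e. $\mathbb C=(C,\Delta,\varepsilon)$ is a comonad on $\mathcal A$ and $(R_A,\xi)$ is a comonad arrow from $\mathbb C$ to $N_BR_B$ with $\xi:CR_A\to R_AN_BR_B$ invertible. Then $(\mathcal T,(N_A,R_A),(N_B,R_B),\tau)$ is a pre-torsor, where $\tau=(\xi N_AR_AN_B)\circ(C\eta^AR_AN_B)\circ(\xi^{-1}N_B)\circ(R_AN_B\eta^B)$. (2) If $(F,t)$ is a morphism $(\mathcal T,(N_A,R_A),(N_B,R_B),\mathbb C,\xi)\to(\mathcal T',(N'_A,R'_A),(N'_B,R'_B),\mathbb C',\xi')$ in $\mathrm{RArr}(\mathcal A,\mathcal B)$, then $F$ is a morphism between the corresponding pre-torsors of (1).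
   Context: Conventions: $\circ$ vertical composition, juxtaposition horizontal composition; a functor's name denotes its identity transformation. Adjunctions $(N_A:\mathcal A\to\mathcal T,R_A)$, $(N_B:\mathcal B\to\mathcal T,R_B)$ with units $\eta^A,\eta^B$, counits $\epsilon^A,\epsilon^B$; $N_BR_B$ is a comonad on $\mathcal T$ with comultiplication $N_B\eta^BR_B$, counit $\epsilon^B$. A comonad arrow $(R_A,\xi)$ from $\mathbb C$ to $N_BR_B$ means $\xi:CR_A\to R_AN_BR_B$ with $(R_A\epsilon^B)\circ\xi=\varepsilon R_A$ and $(R_AN_B\eta^BR_B)\circ\xi=(\xi N_BR_B)\circ(C\xi)\circ(\Delta R_A)$. Pre-torsor: natural $\tau:R_AN_B\to R_AN_BR_BN_AR_AN_B$ with $(R_AN_BR_B\epsilon^AN_B)\circ\tau=R_AN_B\eta^B$, $(R_A\epsilon^BN_AR_AN_B)\circ\tau=\eta^AR_AN_B$, $(R_AN_BR_BN_A\tau)\circ\tau=(\tau R_BN_AR_AN_B)\circ\tau$. For a functor $F:\mathcal T'\to\mathcal T$ with $R_AF=R'_A$, $R_BF=R'_B$ put $a=(\epsilon^AFN'_A)\circ(N_A\eta'^A)$, $b=(\epsilon^BFN'_B)\circ(N_B\eta'^B)$. A morphism of pre-torsors is such $F$ with $(R_AbR_BaR_Ab)\circ\tau=\tau'\circ(R_Ab)$. A morphism in $\mathrm{RArr}(\mathcal A,\mathcal B)$ is a pair $(F,t)$ with $F$ such a functor and $t:\mathbb C\to\mathbb C'$ a comonad morphism satisfying $(R_AbR'_B)\circ(\xi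 F)=\xi'\circ(tR'_A)$. *)

theory Defs
  imports Main
begin

text \<open>A category is given by a type of objects and a type of arrows (every element of
the object type is an object, every element of the arrow type is an arrow), with domain,
codomain, identities and composition. Composition Comp C g f means g after f and is only
constrained for composable pairs.\<close>

record ('o,'m) cat =
  Dom :: "'m \<Rightarrow> 'o"
  Cod :: "'m \<Rightarrow> 'o"
  Id  :: "'o \<Rightarrow> 'm"
  Comp :: "'m \<Rightarrow> 'm \<Rightarrow> 'm"

definition category :: "('o,'m) cat \<Rightarrow> bool" where
  "category C \<longleftrightarrow>
     (\<forall>x. Dom C (Id C x) = x \<and> Cod C (Id C x) = x) \<and>
     (\<forall>f g. Dom C g = Cod C f \<longrightarrow>
        Dom C (Comp C g f) = Dom C f \<and> Cod C (Comp C g f) = Cod C g) \<and>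
     (\<forall>f. Comp C f (Id C (Dom C f)) = f \<and> Comp C (Id C (Cod C f)) f = f) \<and>
     (\<forall>f g h. Dom C g = Cod C f \<longrightarrow> Dom C h = Cod C g \<longrightarrow>
        Comp C h (Comp C g f) = Comp C (Comp C h g) f)"

record ('a,'b,'c,'d) ftr =
  fo :: "'a \<Rightarrow> 'c"
  fa :: "'b \<Rightarrow> 'd"

definition "functor" :: "('a,'b) cat \<Rightarrow> ('c,'d) cat \<Rightarrow> ('a,'b,'c,'d) ftr \<Rightarrow> bool" where
  "functor C D F \<longleftrightarrow> category C \<and> category D \<and>
     (\<forall>f. Dom D (fa F f) = fo F (Dom C f) \<and> Cod D (fa F f) = fo F (Cod C f)) \<and>
     (\<forall>x. fa F (Id C x) = Id D (fo F x)) \<and>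
     (\<forall>f g. Dom C g = Cod C f \<longrightarrow> fa F (Comp C g f) = Comp D (fa F g) (fa F f))"

definition fcomp :: "('c,'d,'e,'f) ftr \<Rightarrow> ('a,'b,'c,'d) ftr \<Rightarrow> ('a,'b,'e,'f) ftr" where
  "fcomp G F = \<lparr>fo = fo G \<circ> fo F, fa = fa G \<circ> fa F\<rparr>"

definition fid :: "('a,'b,'a,'b) ftr" where
  "fid = \<lparr>fo = id, fa = id\<rparr>"

definition natural :: "('a,'b) cat \<Rightarrow> ('c,'d) cat \<Rightarrow> ('a,'b,'c,'d) ftr \<Rightarrow> ('a,'b,'c,'d) ftr
    \<Rightarrow> ('a \<Rightarrow> 'd) \<Rightarrow> bool" where
  "natural C D F G \<alpha> \<longleftrightarrow> functor C D F \<and> functor C D G \<and>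
     (\<forall>x. Dom D (\<alpha> x) = fo F x \<and> Cod D (\<alpha> x) = fo G x) \<and>
     (\<forall>f. Comp D (\<alpha> (Cod C f)) (fa F f) = Comp D (fa G f) (\<alpha> (Dom C f)))"

definition inverse_nt :: "('c,'d) cat \<Rightarrow> ('a \<Rightarrow> 'd) \<Rightarrow> ('a \<Rightarrow> 'd) \<Rightarrow> bool" where
  "inverse_nt D \<alpha> \<beta> \<longleftrightarrow> (\<forall>x. Dom D (\<beta> x) = Cod D (\<alpha> x) \<and> Cod D (\<beta> x) = Dom D (\<alpha> x) \<and>
      Comp D (\<beta> x) (\<alpha> x) = Id D (Dom D (\<alpha> x)) \<and> Comp D (\<alpha> x) (\<beta> x) = Id D (Cod D (\<alpha> x)))"

definition adjunction :: "('a,'am) cat \<Rightarrow> ('t,'tm) cat \<Rightarrow> ('a,'am,'t,'tm) ftr \<Rightarrow> ('t,'tm,'a,'am) ftr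
    \<Rightarrow> ('a \<Rightarrow> 'am) \<Rightarrow> ('t \<Rightarrow> 'tm) \<Rightarrow> bool" where
  "adjunction A T N R \<eta> \<epsilon> \<longleftrightarrow> functor A T N \<and> functor T A R \<and>
     natural A A fid (fcomp R N) \<eta> \<and> natural T T (fcomp N R) fid \<epsilon> \<and>
     (\<forall>x. Comp T (\<epsilon> (fo N x)) (fa N (\<eta> x)) = Id T (fo N x)) \<and>
     (\<forall>y. Comp A (fa R (\<epsilon> y)) (\<eta> (fo R y)) = Id A (fo R y))"

definition comonad :: "('a,'am) cat \<Rightarrow> ('a,'am,'a,'am) ftr \<Rightarrow> ('a \<Rightarrow> 'am) \<Rightarrow> ('a \<Rightarrow> 'am) \<Rightarrow> bool" where
  "comonad A C \<Delta> \<epsilon> \<longleftrightarrow> functor A A C \<and>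
     natural A A C (fcomp C C) \<Delta> \<and> natural A A C fid \<epsilon> \<and>
     (\<forall>x. Comp A (\<epsilon> (fo C x)) (\<Delta> x) = Id A (fo C x)) \<and>
     (\<forall>x. Comp A (fa C (\<epsilon> x)) (\<Delta> x) = Id A (fo C x)) \<and>
     (\<forall>x. Comp A (\<Delta> (fo C x)) (\<Delta> x) = Comp A (fa C (\<Delta> x)) (\<Delta> x))"

text \<open>Comonad arrow (R_A, \<xi>) from (C,\<Delta>,\<epsilon>) to the comonad N_B R_B
  (comultiplication N_B \<eta>^B R_B, counit \<epsilon>^B); \<xi> : C R_A \<Rightarrow> R_A N_B R_B.\<close>

definition comonad_arrow :: "('a,'am) cat \<Rightarrow> ('t,'tm) cat
    \<Rightarrow> ('a,'am,'a,'am) ftr \<Rightarrow> ('a \<Rightarrow> 'am) \<Rightarrow> ('a \<Rightarrow> 'am)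
    \<Rightarrow> ('b,'bm,'t,'tm) ftr \<Rightarrow> ('t,'tm,'b,'bm) ftr \<Rightarrow> ('b \<Rightarrow> 'bm) \<Rightarrow> ('t \<Rightarrow> 'tm)
    \<Rightarrow> ('t,'tm,'a,'am) ftr \<Rightarrow> ('t \<Rightarrow> 'am) \<Rightarrow> bool" where
  "comonad_arrow A T C \<Delta> \<epsilon> NB RB \<eta>B \<epsilon>B RA \<xi> \<longleftrightarrow>
     natural T A (fcomp C RA) (fcomp RA (fcomp NB RB)) \<xi> \<and>
     (\<forall>y. Comp A (fa RA (\<epsilon>B y)) (\<xi> y) = \<epsilon> (fo RA y)) \<and>
     (\<forall>y. Comp A (fa RA (fa NB (\<eta>B (fo RB y)))) (\<xi> y) =
          Comp A (\<xi> (fo NB (fo RB y))) (Comp A (fa C (\<xi> y)) (\<Delta> (fo RA y))))"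

definition rarr_obj :: "('a,'am) cat \<Rightarrow> ('b,'bm) cat \<Rightarrow> ('t,'tm) cat
    \<Rightarrow> ('a,'am,'t,'tm) ftr \<Rightarrow> ('t,'tm,'a,'am) ftr \<Rightarrow> ('a \<Rightarrow> 'am) \<Rightarrow> ('t \<Rightarrow> 'tm)
    \<Rightarrow> ('b,'bm,'t,'tm) ftr \<Rightarrow> ('t,'tm,'b,'bm) ftr \<Rightarrow> ('b \<Rightarrow> 'bm) \<Rightarrow> ('t \<Rightarrow> 'tm)
    \<Rightarrow> ('a,'am,'a,'am) ftr \<Rightarrow> ('a \<Rightarrow> 'am) \<Rightarrow> ('a \<Rightarrow> 'am) \<Rightarrow> ('t \<Rightarrow> 'am) \<Rightarrow> bool" where
  "rarr_obj A B T NA RA \<eta>A \<epsilon>A NB RB \<eta>B \<epsilon>B C \<Delta> \<epsilon> \<xi> \<longleftrightarrow>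
     category A \<and> category B \<and> category T \<and>
     adjunction A T NA RA \<eta>A \<epsilon>A \<and> adjunction B T NB RB \<eta>B \<epsilon>B \<and>
     comonad A C \<Delta> \<epsilon> \<and> comonad_arrow A T C \<Delta> \<epsilon> NB RB \<eta>B \<epsilon>B RA \<xi> \<and>
     (\<exists>\<xi>i. inverse_nt A \<xi> \<xi>i)"

definition comonad_mor :: "('a,'am) cat \<Rightarrow> ('a,'am,'a,'am) ftr \<Rightarrow> ('a \<Rightarrow> 'am) \<Rightarrow> ('a \<Rightarrow> 'am)
    \<Rightarrow> ('a,'am,'a,'am) ftr \<Rightarrow> ('a \<Rightarrow> 'am) \<Rightarrow> ('a \<Rightarrow> 'am) \<Rightarrow> ('a \<Rightarrow> 'am) \<Rightarrow> bool" where
  "comonad_mor A C \<Delta> \<epsilon> C' \<Delta>' \<epsilon>' t \<longleftrightarrow> natural A A C C' t \<and>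
     (\<forall>x. Comp A (\<epsilon>' x) (t x) = \<epsilon> x) \<and>
     (\<forall>x. Comp A (\<Delta>' x) (t x) = Comp A (Comp A (fa C' (t x)) (t (fo C x))) (\<Delta> x))"

text \<open>For F : T' \<rightarrow> T with R F = R', the comparison (\<epsilon> F N') \<circ> (N \<eta>') : N \<Rightarrow> F N'
  (this is a when applied to the A-adjunctions, b for the B-adjunctions).\<close>

definition cmp :: "('t,'tm) cat \<Rightarrow> ('a,'am,'t,'tm) ftr \<Rightarrow> ('t \<Rightarrow> 'tm)
    \<Rightarrow> ('s,'sm,'t,'tm) ftr \<Rightarrow> ('a,'am,'s,'sm) ftr \<Rightarrow> ('a \<Rightarrow> 'am) \<Rightarrow> 'a \<Rightarrow> 'tm" where
  "cmp T N \<epsilon> F N' \<eta>' x = Comp T (\<epsilon> (fo F (fo N' x))) (fa N (\<eta>' x))"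

definition rarr_mor :: "('a,'am) cat \<Rightarrow> ('b,'bm) cat \<Rightarrow> ('t,'tm) cat \<Rightarrow> ('s,'sm) cat
    \<Rightarrow> ('t,'tm,'a,'am) ftr \<Rightarrow> ('b,'bm,'t,'tm) ftr \<Rightarrow> ('t,'tm,'b,'bm) ftr \<Rightarrow> ('t \<Rightarrow> 'tm)
    \<Rightarrow> ('a,'am,'a,'am) ftr \<Rightarrow> ('a \<Rightarrow> 'am) \<Rightarrow> ('a \<Rightarrow> 'am) \<Rightarrow> ('t \<Rightarrow> 'am)
    \<Rightarrow> ('s,'sm,'a,'am) ftr \<Rightarrow> ('b,'bm,'s,'sm) ftr \<Rightarrow> ('s,'sm,'b,'bm) ftr \<Rightarrow> ('b \<Rightarrow> 'bm)
    \<Rightarrow> ('a,'am,'a,'am) ftr \<Rightarrow> ('a \<Rightarrow> 'am) \<Rightarrow> ('a \<Rightarrow> 'am) \<Rightarrow> ('s \<Rightarrow> 'am)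
    \<Rightarrow> ('s,'sm,'t,'tm) ftr \<Rightarrow> ('a \<Rightarrow> 'am) \<Rightarrow> bool" where
  "rarr_mor A B T T' RA NB RB \<epsilon>B C \<Delta> \<epsilon> \<xi> R'A N'B R'B \<eta>'B C' \<Delta>' \<epsilon>' \<xi>' F t \<longleftrightarrow>
     functor T' T F \<and> fcomp RA F = R'A \<and> fcomp RB F = R'B \<and>
     comonad_mor A C \<Delta> \<epsilon> C' \<Delta>' \<epsilon>' t \<and>
     (\<forall>y. Comp A (fa RA (cmp T NB \<epsilon>B F N'B \<eta>'B (fo R'B y))) (\<xi> (fo F y)) =
          Comp A (\<xi>' y) (t (fo R'A y)))"

definition pre_torsor :: "('a,'am) cat \<Rightarrow> ('b,'bm) cat \<Rightarrow> ('t,'tm) cat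
    \<Rightarrow> ('a,'am,'t,'tm) ftr \<Rightarrow> ('t,'tm,'a,'am) ftr \<Rightarrow> ('a \<Rightarrow> 'am) \<Rightarrow> ('t \<Rightarrow> 'tm)
    \<Rightarrow> ('b,'bm,'t,'tm) ftr \<Rightarrow> ('t,'tm,'b,'bm) ftr \<Rightarrow> ('b \<Rightarrow> 'bm) \<Rightarrow> ('t \<Rightarrow> 'tm)
    \<Rightarrow> ('b \<Rightarrow> 'am) \<Rightarrow> bool" where
  "pre_torsor A B T NA RA \<eta>A \<epsilon>A NB RB \<eta>B \<epsilon>B \<tau> \<longleftrightarrow>
     category A \<and> category B \<and> category T \<and>
     adjunction A T NA RA \<eta>A \<epsilon>A \<and> adjunction B T NB RB \<eta>B \<epsilon>B \<and>
     natural B A (fcomp RA NB) (fcomp RA (fcomp NB (fcomp RB (fcomp NA (fcomp RA NB))))) \<tau> \<and>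
     (\<forall>x. Comp A (fa RA (fa NB (fa RB (\<epsilon>A (fo NB x))))) (\<tau> x) = fa RA (fa NB (\<eta>B x))) \<and>
     (\<forall>x. Comp A (fa RA (\<epsilon>B (fo NA (fo RA (fo NB x))))) (\<tau> x) = \<eta>A (fo RA (fo NB x))) \<and>
     (\<forall>x. Comp A (fa RA (fa NB (fa RB (fa NA (\<tau> x))))) (\<tau> x) =
          Comp A (\<tau> (fo RB (fo NA (fo RA (fo NB x))))) (\<tau> x))"

definition mk_tau :: "('a,'am) cat \<Rightarrow> ('a,'am,'a,'am) ftr
    \<Rightarrow> ('a,'am,'t,'tm) ftr \<Rightarrow> ('t,'tm,'a,'am) ftr \<Rightarrow> ('a \<Rightarrow> 'am)
    \<Rightarrow> ('b,'bm,'t,'tm) ftr \<Rightarrow> ('b \<Rightarrow> 'bm) \<Rightarrow> ('t \<Rightarrow> 'am) \<Rightarrow> ('t \<Rightarrow> 'am) \<Rightarrow> 'b \<Rightarrow> 'am" where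
  "mk_tau A C NA RA \<eta>A NB \<eta>B \<xi> \<xi>i x =
     Comp A (\<xi> (fo NA (fo RA (fo NB x))))
       (Comp A (fa C (\<eta>A (fo RA (fo NB x))))
         (Comp A (\<xi>i (fo NB x)) (fa RA (fa NB (\<eta>B x)))))"

text \<open>Morphism of pre-torsors: F : T' \<rightarrow> T with R_A F = R'_A, R_B F = R'_B and
  (R_A b R_B a R_A b) \<circ> \<tau> = \<tau>' \<circ> (R_A b), the horizontal composite written componentwise.\<close>

definition pretorsor_mor :: "('a,'am) cat \<Rightarrow> ('b,'bm) cat \<Rightarrow> ('t,'tm) cat \<Rightarrow> ('s,'sm) cat
    \<Rightarrow> ('a,'am,'t,'tm) ftr \<Rightarrow> ('t,'tm,'a,'am) ftr \<Rightarrow> ('t \<Rightarrow> 'tm)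
    \<Rightarrow> ('b,'bm,'t,'tm) ftr \<Rightarrow> ('t,'tm,'b,'bm) ftr \<Rightarrow> ('t \<Rightarrow> 'tm) \<Rightarrow> ('b \<Rightarrow> 'am)
    \<Rightarrow> ('a,'am,'s,'sm) ftr \<Rightarrow> ('s,'sm,'a,'am) ftr \<Rightarrow> ('a \<Rightarrow> 'am)
    \<Rightarrow> ('b,'bm,'s,'sm) ftr \<Rightarrow> ('s,'sm,'b,'bm) ftr \<Rightarrow> ('b \<Rightarrow> 'bm) \<Rightarrow> ('b \<Rightarrow> 'am)
    \<Rightarrow> ('s,'sm,'t,'tm) ftr \<Rightarrow> bool" where
  "pretorsor_mor A B T T' NA RA \<epsilon>A NB RB \<epsilon>B \<tau> N'A R'A \<eta>'A N'B R'B \<eta>'B \<tau>' F \<longleftrightarrow>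
     functor T' T F \<and> fcomp RA F = R'A \<and> fcomp RB F = R'B \<and>
     (let a = cmp T NA \<epsilon>A F N'A \<eta>'A; b = cmp T NB \<epsilon>B F N'B \<eta>'B;
          L = (\<lambda>x. Comp T (fa F (fa N'A (fa RA (b x)))) (a (fo RA (fo NB x))));
          H = (\<lambda>x. Comp T (fa F (fa N'B (fa RB (L x)))) (b (fo RB (fo NA (fo RA (fo NB x))))))
      in \<forall>x. Comp A (fa RA (H x)) (\<tau> x) = Comp A (\<tau>' x) (fa RA (b x)))"

end

theory Submission
  imports Defs
begin

text \<open>
  In the locale \<open>rarr_object\<close> we factor \<open>\<tau> = (\<sigma> N\<^sub>B) \<circ> (R\<^sub>A N\<^sub>B \<eta>\<^sup>B)\<close> with
  \<open>\<sigma> = (\<xi> N\<^sub>A R\<^sub>A) \<circ> (C \<eta>\<^sup>A R\<^sub>A) \<circ> \<xi>\<^sup>-\<^sup>1\<close>; the pre-torsor axioms reduce to a counit law, a unit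
  law and a coassociativity law for \<open>\<sigma>\<close>, which come from the comonad-arrow axioms of \<open>\<xi>\<close>
  and the comonad laws of \<open>\<C>\<close> (part 1).  In the locale \<open>rarr_morphism\<close> the compatibility
  \<open>(R\<^sub>A b R'\<^sub>B) \<circ> (\<xi> F) = \<xi>' \<circ> (t R'\<^sub>A)\<close> together with the naturality of \<open>t\<close>, \<open>a\<close> and \<open>b\<close>
  transports \<open>\<tau>\<close> to \<open>\<tau>'\<close> (part 2).
\<close>

lemma fo_fcomp [simp]: "fo (fcomp G F) = fo G \<circ> fo F"
  and fa_fcomp [simp]: "fa (fcomp G F) = fa G \<circ> fa F"
  by (simp_all add: fcomp_def)

lemma fo_fid [simp]: "fo fid = id" and fa_fid [simp]: "fa fid = id"
  by (simp_all add: fid_def)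

lemma cat_dom_id [simp]: "category C \<Longrightarrow> Dom C (Id C x) = x"
  and cat_cod_id [simp]: "category C \<Longrightarrow> Cod C (Id C x) = x"
  and cat_dom_comp [simp]: "category C \<Longrightarrow> Dom C g = Cod C f \<Longrightarrow> Dom C (Comp C g f) = Dom C f"
  and cat_cod_comp [simp]: "category C \<Longrightarrow> Dom C g = Cod C f \<Longrightarrow> Cod C (Comp C g f) = Cod C g"
  unfolding category_def by blast+

lemma cat_id_left [simp]: "category C \<Longrightarrow> Cod C f = x \<Longrightarrow> Comp C (Id C x) f = f"
  and cat_id_right [simp]: "category C \<Longrightarrow> Dom C f = x \<Longrightarrow> Comp C f (Id C x) = f"
  unfolding category_def by blast+

text \<open>Associativity, oriented so that simp normalises composites to right-nested form.\<close>

lemma cat_assoc: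
  "category C \<Longrightarrow> Dom C g = Cod C f \<Longrightarrow> Dom C h = Cod C g \<Longrightarrow>
   Comp C (Comp C h g) f = Comp C h (Comp C g f)"
  unfolding category_def by metis

text \<open>Rewriting a composable pair (resp. triple) that occurs at the head of a right-nested
  composite: the basic step of every diagram chase below.\<close>

lemma comp_reassoc:
  "category C \<Longrightarrow> Comp C g f = r \<Longrightarrow> Dom C g = Cod C f \<Longrightarrow> Dom C f = Cod C h
   \<Longrightarrow> Comp C g (Comp C f h) = Comp C r h"
  by (drule sym, simp add: cat_assoc)

lemma comp_reassoc3:
  "category C \<Longrightarrow> Comp C g (Comp C f e) = r \<Longrightarrow> Dom C g = Cod C f \<Longrightarrow> Dom C f = Cod C e
   \<Longrightarrow> Dom C e = Cod C h \<Longrightarrow> Comp C g (Comp C f (Comp C e h)) = Comp C r h"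
  by (drule sym, simp add: cat_assoc)

lemma functor_dom: "functor C D F \<Longrightarrow> Dom D (fa F f) = fo F (Dom C f)"
  and functor_cod: "functor C D F \<Longrightarrow> Cod D (fa F f) = fo F (Cod C f)"
  and functor_id: "functor C D F \<Longrightarrow> fa F (Id C x) = Id D (fo F x)"
  and functor_comp: "functor C D F \<Longrightarrow> Dom C g = Cod C f \<Longrightarrow> fa F (Comp C g f) = Comp D (fa F g) (fa F f)"
  unfolding functor_def by blast+

lemma functor_fcomp: "functor B C G \<Longrightarrow> functor A B F \<Longrightarrow> functor A C (fcomp G F)"
  unfolding functor_def[of A C] by (auto simp: functor_def)

lemma functor_square:
  assumes "functor C D F" and "Comp C g f = Comp C g' f'"
    and "Dom C g = Cod C f" and "Dom C g' = Cod C f'"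
  shows "Comp D (fa F g) (fa F f) = Comp D (fa F g') (fa F f')"
  using assms by (metis functor_comp)

lemma functor_factor:
  "functor C D F \<Longrightarrow> Comp C g f = r \<Longrightarrow> Dom C g = Cod C f \<Longrightarrow> Comp D (fa F g) (fa F f) = fa F r"
  by (drule sym, simp add: functor_comp)

lemma inverse_nt_natural:
  assumes nat: "natural C D F G \<alpha>" and inv: "inverse_nt D \<alpha> \<beta>"
  shows "Comp D (\<beta> (Cod C f)) (fa G f) = Comp D (fa F f) (\<beta> (Dom C f))"
proof -
  have D: "category D" and G: "functor C D G" and F: "functor C D F"
    using nat by (auto simp: natural_def functor_def)
  have \<alpha>: "\<And>x. Dom D (\<alpha> x) = fo F x" "\<And>x. Cod D (\<alpha> x) = fo G x"
    and \<alpha>_nat: "Comp D (\<alpha> (Cod C f)) (fa F f) = Comp D (fa G f) (\<alpha> (Dom C f))"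
    using nat by (auto simp: natural_def)
  have \<beta>: "\<And>x. Dom D (\<beta> x) = fo G x" "\<And>x. Cod D (\<beta> x) = fo F x"
    and \<alpha>\<beta>: "\<And>x. Comp D (\<alpha> x) (\<beta> x) = Id D (fo G x)"
    and \<beta>\<alpha>: "\<And>x. Comp D (\<beta> x) (\<alpha> x) = Id D (fo F x)"
    using inv \<alpha> by (auto simp: inverse_nt_def)
  note simps = \<alpha> \<beta> functor_dom[OF F] functor_cod[OF F] functor_dom[OF G] functor_cod[OF G] D
  have "Comp D (\<beta> (Cod C f)) (fa G f)
      = Comp D (\<beta> (Cod C f)) (Comp D (fa G f) (Comp D (\<alpha> (Dom C f)) (\<beta> (Dom C f))))"
    by (simp add: \<alpha>\<beta> simps)
  also have "\<dots> = Comp D (\<beta> (Cod C f)) (Comp D (\<alpha> (Cod C f)) (Comp D (fa F f) (\<beta> (Dom C f))))"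
    by (subst comp_reassoc[OF D \<alpha>_nat[symmetric]]) (simp_all add: simps cat_assoc)
  also have "\<dots> = Comp D (fa F f) (\<beta> (Dom C f))"
    by (subst comp_reassoc[OF D \<beta>\<alpha>]) (simp_all add: simps)
  finally show ?thesis .
qed

locale adj =
  fixes A :: "('a,'am) cat" and T :: "('t,'tm) cat"
    and N :: "('a,'am,'t,'tm) ftr" and R :: "('t,'tm,'a,'am) ftr"
    and \<eta> :: "'a \<Rightarrow> 'am" and \<epsilon> :: "'t \<Rightarrow> 'tm"
  assumes adjunction: "adjunction A T N R \<eta> \<epsilon>"
begin

lemma N_functor: "functor A T N" and R_functor: "functor T A R"
  using adjunction by (simp_all add: adjunction_def)

lemma cat_A [simp]: "category A" and cat_T [simp]: "category T"
  using N_functor by (simp_all add: functor_def)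

lemmas functor_simps [simp] =
  functor_dom[OF N_functor] functor_cod[OF N_functor] functor_id[OF N_functor]
  functor_dom[OF R_functor] functor_cod[OF R_functor] functor_id[OF R_functor]

lemmas N_comp = functor_comp[OF N_functor] and R_comp = functor_comp[OF R_functor]

lemma unit_dom [simp]: "Dom A (\<eta> x) = x"
  and unit_cod [simp]: "Cod A (\<eta> x) = fo R (fo N x)"
  and unit_nat: "Comp A (\<eta> (Cod A f)) f = Comp A (fa R (fa N f)) (\<eta> (Dom A f))"
  and counit_dom [simp]: "Dom T (\<epsilon> y) = fo N (fo R y)"
  and counit_cod [simp]: "Cod T (\<epsilon> y) = y"
  and counit_nat: "Comp T (\<epsilon> (Cod T g)) (fa N (fa R g)) = Comp T g (\<epsilon> (Dom T g))"
  and triangle_N: "Comp T (\<epsilon> (fo N x)) (fa N (\<eta> x)) = Id T (fo N x)"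
  and triangle_R: "Comp A (fa R (\<epsilon> y)) (\<eta> (fo R y)) = Id A (fo R y)"
  using adjunction unfolding adjunction_def natural_def by auto

end

subsection \<open>The comparison transformation of two adjunctions related by a functor\<close>

text \<open>Given adjunctions \<open>N \<stileturn> R\<close> into \<open>T\<close> and \<open>N' \<stileturn> R'\<close> into \<open>T'\<close> and a functor
  \<open>F : T' \<rightarrow> T\<close> with \<open>R F = R'\<close>, the comparison \<open>(\<epsilon> F N') \<circ> (N \<eta>') : N \<Rightarrow> F N'\<close> is natural
  and transports the unit \<open>\<eta>\<close> to \<open>\<eta>'\<close>.  Both the maps \<open>a\<close> and \<open>b\<close> of a pre-torsor morphism are
  of this form.\<close>

locale adj_comparison = adj A T N R \<eta> \<epsilon> + primed: adj A T' N' R' \<eta>' \<epsilon>'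
  for A :: "('a,'am) cat" and T :: "('t,'tm) cat" and N R \<eta> \<epsilon>
    and T' :: "('s,'sm) cat" and N' R' \<eta>' \<epsilon>' +
  fixes F :: "('s,'sm,'t,'tm) ftr"
  assumes F_functor: "functor T' T F" and R_F: "fcomp R F = R'"
begin

lemma R_F_obj [simp]: "fo R (fo F y) = fo R' y" and R_F_arr [simp]: "fa R (fa F g) = fa R' g"
  using R_F by (metis comp_apply fo_fcomp fa_fcomp)+

lemmas F_simps [simp] = functor_dom[OF F_functor] functor_cod[OF F_functor] functor_id[OF F_functor]

abbreviation cmp_N :: "'a \<Rightarrow> 'tm" where "cmp_N \<equiv> cmp T N \<epsilon> F N' \<eta>'"

lemma cmp_dom [simp]: "Dom T (cmp_N x) = fo N x"
  and cmp_cod [simp]: "Cod T (cmp_N x) = fo F (fo N' x)"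
  by (simp_all add: cmp_def)

lemma cmp_nat: "Comp T (cmp_N (Cod A g)) (fa N g) = Comp T (fa F (fa N' g)) (cmp_N (Dom A g))"
proof -
  have "Comp T (fa N (\<eta>' (Cod A g))) (fa N g) = Comp T (fa N (fa R' (fa N' g))) (fa N (\<eta>' (Dom A g)))"
    by (rule functor_square[OF N_functor primed.unit_nat]) simp_all
  then have "Comp T (cmp_N (Cod A g)) (fa N g)
      = Comp T (\<epsilon> (fo F (fo N' (Cod A g)))) (Comp T (fa N (fa R' (fa N' g))) (fa N (\<eta>' (Dom A g))))"
    by (simp add: cmp_def cat_assoc)
  also have "\<dots> = Comp T (fa F (fa N' g)) (Comp T (\<epsilon> (fo F (fo N' (Dom A g)))) (fa N (\<eta>' (Dom A g))))"
    by (subst comp_reassoc[OF cat_T counit_nat[of "fa F (fa N' g)", simplified]]) (simp_all add: cat_assoc)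
  finally show ?thesis by (simp add: cmp_def)
qed

lemma cmp_unit: "Comp A (fa R (cmp_N x)) (\<eta> x) = \<eta>' x"
proof -
  have "Comp A (fa R (cmp_N x)) (\<eta> x) = Comp A (fa R (\<epsilon> (fo F (fo N' x)))) (Comp A (fa R (fa N (\<eta>' x))) (\<eta> x))"
    by (simp add: cmp_def R_comp cat_assoc)
  also have "\<dots> = Comp A (fa R (\<epsilon> (fo F (fo N' x)))) (Comp A (\<eta> (fo R' (fo N' x))) (\<eta>' x))"
    by (subst unit_nat[of "\<eta>' x", simplified, symmetric]) (rule refl)
  also have "\<dots> = \<eta>' x"
    by (subst comp_reassoc[OF cat_A triangle_R[of "fo F (fo N' x)", simplified]]) simp_all
  finally show ?thesis .
qed

end

locale comp_notation =
  fixes A :: "('a,'am) cat"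
begin

abbreviation compA (infixr "\<cdot>" 55) where "g \<cdot> f \<equiv> Comp A g f"

end

locale rarr_object = comp_notation A +
  A_adj: adj A T NA RA \<eta>A \<epsilon>A + B_adj: adj B T NB RB \<eta>B \<epsilon>B
  for A :: "('a,'am) cat" and B :: "('b,'bm) cat" and T :: "('t,'tm) cat"
    and NA RA \<eta>A \<epsilon>A NB RB \<eta>B \<epsilon>B +
  fixes C :: "('a,'am,'a,'am) ftr" and \<Delta> :: "'a \<Rightarrow> 'am" and \<epsilon> :: "'a \<Rightarrow> 'am"
    and \<xi> :: "'t \<Rightarrow> 'am" and \<xi>i :: "'t \<Rightarrow> 'am"
  assumes comonad: "comonad A C \<Delta> \<epsilon>"
    and arrow: "comonad_arrow A T C \<Delta> \<epsilon> NB RB \<eta>B \<epsilon>B RA \<xi>"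
    and xi_inverse: "inverse_nt A \<xi> \<xi>i"
begin

lemmas A_reassoc = comp_reassoc[OF A_adj.cat_A] and A_reassoc3 = comp_reassoc3[OF A_adj.cat_A]

lemma C_functor: "functor A A C"
  using comonad by (simp add: comonad_def)

lemmas C_simps [simp] = functor_dom[OF C_functor] functor_cod[OF C_functor] functor_id[OF C_functor]

lemma comult_dom [simp]: "Dom A (\<Delta> x) = fo C x"
  and comult_cod [simp]: "Cod A (\<Delta> x) = fo C (fo C x)"
  and comult_nat: "\<Delta> (Cod A f) \<cdot> fa C f = fa C (fa C f) \<cdot> \<Delta> (Dom A f)"
  and counit_dom [simp]: "Dom A (\<epsilon> x) = fo C x"
  and counit_cod [simp]: "Cod A (\<epsilon> x) = x"
  and counit_nat: "\<epsilon> (Cod A f) \<cdot> fa C f = f \<cdot> \<epsilon> (Dom A f)"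
  using comonad unfolding comonad_def natural_def by auto

lemma xi_natural: "natural T A (fcomp C RA) (fcomp RA (fcomp NB RB)) \<xi>"
  using arrow by (simp add: comonad_arrow_def)

lemma xi_dom [simp]: "Dom A (\<xi> y) = fo C (fo RA y)"
  and xi_cod [simp]: "Cod A (\<xi> y) = fo RA (fo NB (fo RB y))"
  and xi_nat: "\<xi> (Cod T g) \<cdot> fa C (fa RA g) = fa RA (fa NB (fa RB g)) \<cdot> \<xi> (Dom T g)"
  and xi_counit: "fa RA (\<epsilon>B y) \<cdot> \<xi> y = \<epsilon> (fo RA y)"
  and xi_comult: "fa RA (fa NB (\<eta>B (fo RB y))) \<cdot> \<xi> y = \<xi> (fo NB (fo RB y)) \<cdot> fa C (\<xi> y) \<cdot> \<Delta> (fo RA y)"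
  using arrow unfolding comonad_arrow_def natural_def by auto

lemma xi_inv_dom [simp]: "Dom A (\<xi>i y) = fo RA (fo NB (fo RB y))"
  and xi_inv_cod [simp]: "Cod A (\<xi>i y) = fo C (fo RA y)"
  and xi_inv_xi: "\<xi>i y \<cdot> \<xi> y = Id A (fo C (fo RA y))"
  and xi_xi_inv: "\<xi> y \<cdot> \<xi>i y = Id A (fo RA (fo NB (fo RB y)))"
  using xi_inverse unfolding inverse_nt_def by auto

lemma xi_inv_nat: "\<xi>i (Cod T g) \<cdot> fa RA (fa NB (fa RB g)) = fa C (fa RA g) \<cdot> \<xi>i (Dom T g)"
  using inverse_nt_natural[OF xi_natural xi_inverse] by simp

lemma xi_inv_counit: "\<epsilon> (fo RA y) \<cdot> \<xi>i y = fa RA (\<epsilon>B y)"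
  by (simp add: xi_counit[symmetric] cat_assoc xi_xi_inv)

lemma xi_inv_comult:
  "\<xi>i (fo NB (fo RB y)) \<cdot> fa RA (fa NB (\<eta>B (fo RB y))) = fa C (\<xi> y) \<cdot> \<Delta> (fo RA y) \<cdot> \<xi>i y"
proof -
  have "\<xi>i (fo NB (fo RB y)) \<cdot> fa RA (fa NB (\<eta>B (fo RB y)))
      = \<xi>i (fo NB (fo RB y)) \<cdot> fa RA (fa NB (\<eta>B (fo RB y))) \<cdot> \<xi> y \<cdot> \<xi>i y"
    by (simp add: xi_xi_inv)
  also have "\<dots> = \<xi>i (fo NB (fo RB y)) \<cdot> \<xi> (fo NB (fo RB y)) \<cdot> fa C (\<xi> y) \<cdot> \<Delta> (fo RA y) \<cdot> \<xi>i y"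
    by (subst A_reassoc[OF xi_comult]) (simp_all add: cat_assoc)
  also have "\<dots> = fa C (\<xi> y) \<cdot> \<Delta> (fo RA y) \<cdot> \<xi>i y"
    by (subst A_reassoc[OF xi_inv_xi]) simp_all
  finally show ?thesis .
qed

lemma xi_inv_comult_xi:
  "\<xi>i (fo NB (fo RB y)) \<cdot> fa RA (fa NB (\<eta>B (fo RB y))) \<cdot> \<xi> y = fa C (\<xi> y) \<cdot> \<Delta> (fo RA y)"
  by (subst A_reassoc[OF xi_inv_comult]) (simp_all add: cat_assoc xi_inv_xi)

subsubsection \<open>The transformation \<open>\<sigma>\<close>\<close>

text \<open>\<open>\<sigma> = (\<xi> N\<^sub>A R\<^sub>A) \<circ> (C \<eta>\<^sup>A R\<^sub>A) \<circ> \<xi>\<^sup>-\<^sup>1 : R\<^sub>A N\<^sub>B R\<^sub>B \<Rightarrow> R\<^sub>A N\<^sub>B R\<^sub>B N\<^sub>A R\<^sub>A\<close> is the part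
  of \<open>\<tau>\<close> that does not involve \<open>\<eta>\<^sup>B\<close>: \<open>\<tau> = (\<sigma> N\<^sub>B) \<circ> (R\<^sub>A N\<^sub>B \<eta>\<^sup>B)\<close>.  The pre-torsor axioms
  for \<open>\<tau>\<close> follow from a counit law, a unit-compatibility law and a coassociativity law
  for \<open>\<sigma>\<close>.\<close>

definition sigma :: "'t \<Rightarrow> 'am" where
  "sigma y = \<xi> (fo NA (fo RA y)) \<cdot> fa C (\<eta>A (fo RA y)) \<cdot> \<xi>i y"

lemma sigma_dom [simp]: "Dom A (sigma y) = fo RA (fo NB (fo RB y))"
  and sigma_cod [simp]: "Cod A (sigma y) = fo RA (fo NB (fo RB (fo NA (fo RA y))))"
  by (simp_all add: sigma_def)

lemma sigma_nat:
  "sigma (Cod T g) \<cdot> fa RA (fa NB (fa RB g)) = fa RA (fa NB (fa RB (fa NA (fa RA g)))) \<cdot> sigma (Dom T g)"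
proof -
  have C_unit: "fa C (\<eta>A (fo RA (Cod T g))) \<cdot> fa C (fa RA g)
      = fa C (fa RA (fa NA (fa RA g))) \<cdot> fa C (\<eta>A (fo RA (Dom T g)))"
    by (rule functor_square[OF C_functor A_adj.unit_nat[of "fa RA g"], simplified])
  have "sigma (Cod T g) \<cdot> fa RA (fa NB (fa RB g))
      = \<xi> (fo NA (fo RA (Cod T g))) \<cdot> fa C (\<eta>A (fo RA (Cod T g))) \<cdot> fa C (fa RA g) \<cdot> \<xi>i (Dom T g)"
    by (simp add: sigma_def cat_assoc xi_inv_nat)
  also have "\<dots> = \<xi> (fo NA (fo RA (Cod T g))) \<cdot> fa C (fa RA (fa NA (fa RA g)))
      \<cdot> fa C (\<eta>A (fo RA (Dom T g))) \<cdot> \<xi>i (Dom T g)"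
    by (subst A_reassoc[OF C_unit]) (simp_all add: cat_assoc)
  also have "\<dots> = fa RA (fa NB (fa RB (fa NA (fa RA g)))) \<cdot> sigma (Dom T g)"
    by (subst A_reassoc[OF xi_nat[of "fa NA (fa RA g)", simplified]]) (simp_all add: sigma_def cat_assoc)
  finally show ?thesis .
qed

lemma sigma_counit: "fa RA (fa NB (fa RB (\<epsilon>A y))) \<cdot> sigma y = Id A (fo RA (fo NB (fo RB y)))"
proof -
  have C_triangle: "fa C (fa RA (\<epsilon>A y)) \<cdot> fa C (\<eta>A (fo RA y)) = Id A (fo C (fo RA y))"
    by (subst functor_factor[OF C_functor A_adj.triangle_R[of y]]) simp_all
  have "fa RA (fa NB (fa RB (\<epsilon>A y))) \<cdot> sigma y
      = \<xi> y \<cdot> fa C (fa RA (\<epsilon>A y)) \<cdot> fa C (\<eta>A (fo RA y)) \<cdot> \<xi>i y"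
    unfolding sigma_def
    by (subst A_reassoc[OF xi_nat[of "\<epsilon>A y", simplified, symmetric]]) (simp_all add: cat_assoc)
  also have "\<dots> = \<xi> y \<cdot> \<xi>i y"
    by (subst A_reassoc[OF C_triangle]) simp_all
  finally show ?thesis by (simp add: xi_xi_inv)
qed

lemma sigma_unit: "fa RA (\<epsilon>B (fo NA (fo RA y))) \<cdot> sigma y = \<eta>A (fo RA y) \<cdot> fa RA (\<epsilon>B y)"
proof -
  have "fa RA (\<epsilon>B (fo NA (fo RA y))) \<cdot> sigma y = \<epsilon> (fo RA (fo NA (fo RA y))) \<cdot> fa C (\<eta>A (fo RA y)) \<cdot> \<xi>i y"
    unfolding sigma_def by (subst A_reassoc[OF xi_counit]) simp_all
  also have "\<dots> = \<eta>A (fo RA y) \<cdot> \<epsilon> (fo RA y) \<cdot> \<xi>i y"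
    by (subst A_reassoc[OF counit_nat[of "\<eta>A (fo RA y)", simplified]]) (simp_all add: cat_assoc)
  finally show ?thesis by (simp add: xi_inv_counit)
qed

lemma sigma_xi: "sigma y \<cdot> \<xi> y = \<xi> (fo NA (fo RA y)) \<cdot> fa C (\<eta>A (fo RA y))"
  unfolding sigma_def by (simp add: cat_assoc xi_inv_xi)

text \<open>Coassociativity: both composites agree with
  \<open>\<xi> \<circ> C\<eta>\<^sup>A \<circ> C\<xi> \<circ> CC\<eta>\<^sup>A \<circ> \<Delta> \<circ> \<xi>\<^sup>-\<^sup>1\<close>, using the comultiplication axiom of \<open>\<xi>\<close> and the
  naturality of \<open>\<Delta>\<close>.\<close>

abbreviation "NRNR y \<equiv> fo NB (fo RB (fo NA (fo RA y)))"

lemma sigma_coassoc_left: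
  "fa RA (fa NB (fa RB (fa NA (sigma y)))) \<cdot> sigma (fo NB (fo RB y)) \<cdot> fa RA (fa NB (\<eta>B (fo RB y)))
   = \<xi> (fo NA (fo RA (NRNR y))) \<cdot> fa C (\<eta>A (fo RA (NRNR y)))
       \<cdot> fa C (\<xi> (fo NA (fo RA y))) \<cdot> fa C (fa C (\<eta>A (fo RA y))) \<cdot> \<Delta> (fo RA y) \<cdot> \<xi>i y"
proof -
  have C_unit: "fa C (fa RA (fa NA (sigma y))) \<cdot> fa C (\<eta>A (fo RA (fo NB (fo RB y))))
      = fa C (\<eta>A (fo RA (NRNR y))) \<cdot> fa C (sigma y)"
    by (rule functor_square[OF C_functor A_adj.unit_nat[of "sigma y", symmetric], simplified])
  have C_sigma_xi: "fa C (sigma y) \<cdot> fa C (\<xi> y) = fa C (\<xi> (fo NA (fo RA y))) \<cdot> fa C (fa C (\<eta>A (fo RA y)))"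
    by (rule functor_square[OF C_functor sigma_xi]) simp_all
  have "fa RA (fa NB (fa RB (fa NA (sigma y)))) \<cdot> sigma (fo NB (fo RB y)) \<cdot> fa RA (fa NB (\<eta>B (fo RB y)))
      = fa RA (fa NB (fa RB (fa NA (sigma y)))) \<cdot> \<xi> (fo NA (fo RA (fo NB (fo RB y))))
        \<cdot> fa C (\<eta>A (fo RA (fo NB (fo RB y)))) \<cdot> fa C (\<xi> y) \<cdot> \<Delta> (fo RA y) \<cdot> \<xi>i y"
    by (simp add: sigma_def[of "fo NB (fo RB y)"] cat_assoc xi_inv_comult)
  also have "\<dots> = \<xi> (fo NA (fo RA (NRNR y))) \<cdot> fa C (fa RA (fa NA (sigma y)))
        \<cdot> fa C (\<eta>A (fo RA (fo NB (fo RB y)))) \<cdot> fa C (\<xi> y) \<cdot> \<Delta> (fo RA y) \<cdot> \<xi>i y"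
    by (subst A_reassoc[OF xi_nat[of "fa NA (sigma y)", simplified, symmetric]]) (simp_all add: cat_assoc)
  also have "\<dots> = \<xi> (fo NA (fo RA (NRNR y))) \<cdot> fa C (\<eta>A (fo RA (NRNR y)))
        \<cdot> fa C (sigma y) \<cdot> fa C (\<xi> y) \<cdot> \<Delta> (fo RA y) \<cdot> \<xi>i y"
    by (subst A_reassoc[OF C_unit]) (simp_all add: cat_assoc)
  also have "\<dots> = \<xi> (fo NA (fo RA (NRNR y))) \<cdot> fa C (\<eta>A (fo RA (NRNR y)))
        \<cdot> fa C (\<xi> (fo NA (fo RA y))) \<cdot> fa C (fa C (\<eta>A (fo RA y))) \<cdot> \<Delta> (fo RA y) \<cdot> \<xi>i y"
    by (subst A_reassoc[OF C_sigma_xi]) (simp_all add: cat_assoc)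
  finally show ?thesis .
qed

lemma sigma_coassoc_right:
  "sigma (NRNR y) \<cdot> fa RA (fa NB (\<eta>B (fo RB (fo NA (fo RA y))))) \<cdot> sigma y
   = \<xi> (fo NA (fo RA (NRNR y))) \<cdot> fa C (\<eta>A (fo RA (NRNR y)))
       \<cdot> fa C (\<xi> (fo NA (fo RA y))) \<cdot> fa C (fa C (\<eta>A (fo RA y))) \<cdot> \<Delta> (fo RA y) \<cdot> \<xi>i y"
proof -
  have "sigma (NRNR y) \<cdot> fa RA (fa NB (\<eta>B (fo RB (fo NA (fo RA y))))) \<cdot> sigma y
      = \<xi> (fo NA (fo RA (NRNR y))) \<cdot> fa C (\<eta>A (fo RA (NRNR y)))
        \<cdot> \<xi>i (NRNR y) \<cdot> fa RA (fa NB (\<eta>B (fo RB (fo NA (fo RA y))))) \<cdot> \<xi> (fo NA (fo RA y))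
        \<cdot> fa C (\<eta>A (fo RA y)) \<cdot> \<xi>i y"
    by (simp add: sigma_def cat_assoc)
  also have "\<dots> = \<xi> (fo NA (fo RA (NRNR y))) \<cdot> fa C (\<eta>A (fo RA (NRNR y)))
        \<cdot> fa C (\<xi> (fo NA (fo RA y))) \<cdot> \<Delta> (fo RA (fo NA (fo RA y))) \<cdot> fa C (\<eta>A (fo RA y)) \<cdot> \<xi>i y"
    by (subst A_reassoc3[OF xi_inv_comult_xi[of "fo NA (fo RA y)"]]) (simp_all add: cat_assoc)
  also have "\<dots> = \<xi> (fo NA (fo RA (NRNR y))) \<cdot> fa C (\<eta>A (fo RA (NRNR y)))
        \<cdot> fa C (\<xi> (fo NA (fo RA y))) \<cdot> fa C (fa C (\<eta>A (fo RA y))) \<cdot> \<Delta> (fo RA y) \<cdot> \<xi>i y"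
    by (subst A_reassoc[OF comult_nat[of "\<eta>A (fo RA y)", simplified]]) (simp_all add: cat_assoc)
  finally show ?thesis .
qed

lemma sigma_coassoc:
  "fa RA (fa NB (fa RB (fa NA (sigma y)))) \<cdot> sigma (fo NB (fo RB y)) \<cdot> fa RA (fa NB (\<eta>B (fo RB y)))
   = sigma (NRNR y) \<cdot> fa RA (fa NB (\<eta>B (fo RB (fo NA (fo RA y))))) \<cdot> sigma y"
  unfolding sigma_coassoc_left sigma_coassoc_right ..

end

lemma rarr_objectI:
  "rarr_obj A B T NA RA \<eta>A \<epsilon>A NB RB \<eta>B \<epsilon>B C \<Delta> \<epsilon> \<xi> \<Longrightarrow> inverse_nt A \<xi> \<xi>i \<Longrightarrow>
   rarr_object A B T NA RA \<eta>A \<epsilon>A NB RB \<eta>B \<epsilon>B C \<Delta> \<epsilon> \<xi> \<xi>i"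
  unfolding rarr_obj_def by (simp add: rarr_object_def rarr_object_axioms_def adj_def)

context rarr_object
begin

abbreviation tau :: "'b \<Rightarrow> 'am" where "tau \<equiv> mk_tau A C NA RA \<eta>A NB \<eta>B \<xi> \<xi>i"

lemma tau_sigma: "tau x = sigma (fo NB x) \<cdot> fa RA (fa NB (\<eta>B x))"
  by (simp add: mk_tau_def sigma_def cat_assoc)

lemma tau_dom [simp]: "Dom A (tau x) = fo RA (fo NB x)"
  and tau_cod [simp]: "Cod A (tau x) = fo RA (fo NB (fo RB (fo NA (fo RA (fo NB x)))))"
  by (simp_all add: tau_sigma)

lemma RA_NB_unit_nat:
  "fa RA (fa NB (\<eta>B (Cod B f))) \<cdot> fa RA (fa NB f) = fa RA (fa NB (fa RB (fa NB f))) \<cdot> fa RA (fa NB (\<eta>B (Dom B f)))"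
proof -
  have "Comp T (fa NB (\<eta>B (Cod B f))) (fa NB f) = Comp T (fa NB (fa RB (fa NB f))) (fa NB (\<eta>B (Dom B f)))"
    by (rule functor_square[OF B_adj.N_functor B_adj.unit_nat]) simp_all
  then show ?thesis
    by (rule functor_square[OF A_adj.R_functor]) simp_all
qed

lemma tau_nat:
  "tau (Cod B f) \<cdot> fa RA (fa NB f) = fa RA (fa NB (fa RB (fa NA (fa RA (fa NB f))))) \<cdot> tau (Dom B f)"
proof -
  have "tau (Cod B f) \<cdot> fa RA (fa NB f)
      = sigma (fo NB (Cod B f)) \<cdot> fa RA (fa NB (fa RB (fa NB f))) \<cdot> fa RA (fa NB (\<eta>B (Dom B f)))"
    by (simp add: tau_sigma cat_assoc RA_NB_unit_nat)
  also have "\<dots> = fa RA (fa NB (fa RB (fa NA (fa RA (fa NB f))))) \<cdot> tau (Dom B f)"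
    by (subst A_reassoc[OF sigma_nat[of "fa NB f", simplified]]) (simp_all add: tau_sigma cat_assoc)
  finally show ?thesis .
qed

lemma tau_natural:
  "natural B A (fcomp RA NB) (fcomp RA (fcomp NB (fcomp RB (fcomp NA (fcomp RA NB))))) tau"
proof -
  have RA_NB: "functor B A (fcomp RA NB)"
    by (rule functor_fcomp[OF A_adj.R_functor B_adj.N_functor])
  have "functor B A (fcomp RA (fcomp NB (fcomp RB (fcomp NA (fcomp RA NB)))))"
    by (rule functor_fcomp[OF A_adj.R_functor functor_fcomp[OF B_adj.N_functor
          functor_fcomp[OF B_adj.R_functor functor_fcomp[OF A_adj.N_functor RA_NB]]]])
  with RA_NB show ?thesis
    unfolding natural_def by (simp add: tau_nat)
qed

lemma tau_counit_A: "fa RA (fa NB (fa RB (\<epsilon>A (fo NB x)))) \<cdot> tau x = fa RA (fa NB (\<eta>B x))"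
  unfolding tau_sigma by (subst A_reassoc[OF sigma_counit]) simp_all

lemma tau_counit_B: "fa RA (\<epsilon>B (fo NA (fo RA (fo NB x)))) \<cdot> tau x = \<eta>A (fo RA (fo NB x))"
proof -
  have RA_triangle: "fa RA (\<epsilon>B (fo NB x)) \<cdot> fa RA (fa NB (\<eta>B x)) = Id A (fo RA (fo NB x))"
    by (subst functor_factor[OF A_adj.R_functor B_adj.triangle_N]) simp_all
  show ?thesis
    unfolding tau_sigma by (subst A_reassoc[OF sigma_unit]) (simp_all add: cat_assoc RA_triangle)
qed

lemma tau_coassoc:
  "fa RA (fa NB (fa RB (fa NA (tau x)))) \<cdot> tau x = tau (fo RB (fo NA (fo RA (fo NB x)))) \<cdot> tau x"
proof -
  have unit_square: "fa RA (fa NB (fa RB (fa NB (\<eta>B x)))) \<cdot> fa RA (fa NB (\<eta>B x))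
      = fa RA (fa NB (\<eta>B (fo RB (fo NB x)))) \<cdot> fa RA (fa NB (\<eta>B x))"
    using RA_NB_unit_nat[of "\<eta>B x"] by simp
  have "fa RA (fa NB (fa RB (fa NA (tau x)))) \<cdot> tau x
      = fa RA (fa NB (fa RB (fa NA (sigma (fo NB x))))) \<cdot> fa RA (fa NB (fa RB (fa NA (fa RA (fa NB (\<eta>B x))))))
        \<cdot> sigma (fo NB x) \<cdot> fa RA (fa NB (\<eta>B x))"
    by (simp add: tau_sigma cat_assoc A_adj.N_comp A_adj.R_comp B_adj.N_comp B_adj.R_comp)
  also have "\<dots> = fa RA (fa NB (fa RB (fa NA (sigma (fo NB x))))) \<cdot> sigma (fo NB (fo RB (fo NB x)))
        \<cdot> fa RA (fa NB (\<eta>B (fo RB (fo NB x)))) \<cdot> fa RA (fa NB (\<eta>B x))"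
    by (subst A_reassoc[OF sigma_nat[of "fa NB (\<eta>B x)", simplified, symmetric]])
      (simp_all add: cat_assoc unit_square)
  also have "\<dots> = tau (fo RB (fo NA (fo RA (fo NB x)))) \<cdot> tau x"
    by (subst A_reassoc3[OF sigma_coassoc[of "fo NB x"]]) (simp_all add: tau_sigma cat_assoc)
  finally show ?thesis .
qed

theorem pre_torsor_tau: "pre_torsor A B T NA RA \<eta>A \<epsilon>A NB RB \<eta>B \<epsilon>B tau"
  unfolding pre_torsor_def
  using A_adj.adjunction B_adj.adjunction tau_natural tau_counit_A tau_counit_B tau_coassoc
  by simp

end

subsection \<open>A morphism of RArr(A,B) between objects with chosen inverses\<close>

locale rarr_morphism =
  src: rarr_object A B T NA RA \<eta>A \<epsilon>A NB RB \<eta>B \<epsilon>B C \<Delta> \<epsilon> \<xi> \<xi>i +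
  tgt: rarr_object A B T' N'A R'A \<eta>'A \<epsilon>'A N'B R'B \<eta>'B \<epsilon>'B C' \<Delta>' \<epsilon>' \<xi>' \<xi>'i
  for A :: "('a,'am) cat" and B :: "('b,'bm) cat" and T :: "('t,'tm) cat"
    and NA RA \<eta>A \<epsilon>A NB RB \<eta>B \<epsilon>B C \<Delta> \<epsilon> \<xi> \<xi>i
    and T' :: "('s,'sm) cat" and N'A R'A \<eta>'A \<epsilon>'A N'B R'B \<eta>'B \<epsilon>'B C' \<Delta>' \<epsilon>' \<xi>' \<xi>'i +
  fixes F :: "('s,'sm,'t,'tm) ftr" and t :: "'a \<Rightarrow> 'am"
  assumes morphism: "rarr_mor A B T T' RA NB RB \<epsilon>B C \<Delta> \<epsilon> \<xi> R'A N'B R'B \<eta>'B C' \<Delta>' \<epsilon>' \<xi>' F t"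
begin

sublocale a: adj_comparison A T NA RA \<eta>A \<epsilon>A T' N'A R'A \<eta>'A \<epsilon>'A F
  using morphism by unfold_locales (simp_all add: rarr_mor_def)

sublocale b: adj_comparison B T NB RB \<eta>B \<epsilon>B T' N'B R'B \<eta>'B \<epsilon>'B F
  using morphism by unfold_locales (simp_all add: rarr_mor_def)

lemma t_dom [simp]: "Dom A (t x) = fo C x"
  and t_cod [simp]: "Cod A (t x) = fo C' x"
  and t_nat: "t (Cod A f) \<cdot> fa C f = fa C' f \<cdot> t (Dom A f)"
  using morphism unfolding rarr_mor_def comonad_mor_def natural_def by auto

lemma xi_compat: "fa RA (b.cmp_N (fo R'B y)) \<cdot> \<xi> (fo F y) = \<xi>' y \<cdot> t (fo R'A y)"
  using morphism unfolding rarr_mor_def by blast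

text \<open>The composite \<open>(F N'\<^sub>A R\<^sub>A b) \<circ> (a R\<^sub>A N\<^sub>B) : N\<^sub>A R\<^sub>A N\<^sub>B \<Rightarrow> F N'\<^sub>A R'\<^sub>A N'\<^sub>B\<close> occurring in the
  definition of a pre-torsor morphism, and its interaction with the units of the A-adjunctions.\<close>

definition ab :: "'b \<Rightarrow> 'tm" where
  "ab x = Comp T (fa F (fa N'A (fa RA (b.cmp_N x)))) (a.cmp_N (fo RA (fo NB x)))"

lemma ab_dom [simp]: "Dom T (ab x) = fo NA (fo RA (fo NB x))"
  and ab_cod [simp]: "Cod T (ab x) = fo F (fo N'A (fo R'A (fo N'B x)))"
  by (simp_all add: ab_def)

lemma ab_unit: "fa RA (ab x) \<cdot> \<eta>A (fo RA (fo NB x)) = \<eta>'A (fo R'A (fo N'B x)) \<cdot> fa RA (b.cmp_N x)"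
proof -
  have "fa RA (ab x) \<cdot> \<eta>A (fo RA (fo NB x))
      = fa R'A (fa N'A (fa RA (b.cmp_N x))) \<cdot> fa RA (a.cmp_N (fo RA (fo NB x))) \<cdot> \<eta>A (fo RA (fo NB x))"
    by (simp add: ab_def src.A_adj.R_comp cat_assoc)
  also have "\<dots> = fa R'A (fa N'A (fa RA (b.cmp_N x))) \<cdot> \<eta>'A (fo RA (fo NB x))"
    by (simp add: a.cmp_unit)
  also have "\<dots> = \<eta>'A (fo R'A (fo N'B x)) \<cdot> fa RA (b.cmp_N x)"
    by (subst tgt.A_adj.unit_nat[of "fa RA (b.cmp_N x)", simplified, symmetric]) simp
  finally show ?thesis .
qed

lemma xi_inv_unit_compat:
  "t (fo R'A (fo N'B x)) \<cdot> fa C (fa RA (b.cmp_N x)) \<cdot> \<xi>i (fo NB x) \<cdot> fa RA (fa NB (\<eta>B x))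
   = \<xi>'i (fo N'B x) \<cdot> fa R'A (fa N'B (\<eta>'B x)) \<cdot> fa RA (b.cmp_N x)"
proof -
  have unit_b: "fa RA (fa NB (fa RB (b.cmp_N x))) \<cdot> fa RA (fa NB (\<eta>B x)) = fa RA (fa NB (\<eta>'B x))"
  proof -
    have "Comp T (fa NB (fa RB (b.cmp_N x))) (fa NB (\<eta>B x)) = fa NB (\<eta>'B x)"
      by (rule functor_factor[OF src.B_adj.N_functor b.cmp_unit]) simp
    then show ?thesis
      by (rule functor_factor[OF src.A_adj.R_functor]) simp
  qed
  have RA_b_nat: "fa RA (b.cmp_N (fo R'B (fo N'B x))) \<cdot> fa RA (fa NB (\<eta>'B x))
      = fa R'A (fa N'B (\<eta>'B x)) \<cdot> fa RA (b.cmp_N x)"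
    by (rule functor_square[OF src.A_adj.R_functor b.cmp_nat[of "\<eta>'B x"], simplified])
  let ?lhs = "t (fo R'A (fo N'B x)) \<cdot> fa C (fa RA (b.cmp_N x)) \<cdot> \<xi>i (fo NB x) \<cdot> fa RA (fa NB (\<eta>B x))"
  have "?lhs = (\<xi>'i (fo N'B x) \<cdot> \<xi>' (fo N'B x)) \<cdot> ?lhs"
    by (simp add: tgt.xi_inv_xi)
  also have "\<dots> = \<xi>'i (fo N'B x) \<cdot> \<xi>' (fo N'B x) \<cdot> ?lhs"
    by (simp add: cat_assoc)
  also have "\<dots> = \<xi>'i (fo N'B x) \<cdot> fa RA (b.cmp_N (fo R'B (fo N'B x))) \<cdot> \<xi> (fo F (fo N'B x))
       \<cdot> fa C (fa RA (b.cmp_N x)) \<cdot> \<xi>i (fo NB x) \<cdot> fa RA (fa NB (\<eta>B x))"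
    by (subst src.A_reassoc[OF xi_compat[symmetric]]) (simp_all add: cat_assoc)
  also have "\<dots> = \<xi>'i (fo N'B x) \<cdot> fa RA (b.cmp_N (fo R'B (fo N'B x))) \<cdot> fa RA (fa NB (fa RB (b.cmp_N x)))
       \<cdot> \<xi> (fo NB x) \<cdot> \<xi>i (fo NB x) \<cdot> fa RA (fa NB (\<eta>B x))"
    by (subst src.A_reassoc[OF src.xi_nat[of "b.cmp_N x", simplified]]) (simp_all add: cat_assoc)
  also have "\<dots> = \<xi>'i (fo N'B x) \<cdot> fa RA (b.cmp_N (fo R'B (fo N'B x))) \<cdot> fa RA (fa NB (\<eta>'B x))"
    by (subst src.A_reassoc[OF src.xi_xi_inv]) (simp_all add: unit_b)
  also have "\<dots> = \<xi>'i (fo N'B x) \<cdot> fa R'A (fa N'B (\<eta>'B x)) \<cdot> fa RA (b.cmp_N x)"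
    by (simp only: RA_b_nat)
  finally show ?thesis .
qed

text \<open>The whiskered composite \<open>H = (F N'\<^sub>B R\<^sub>B ab) \<circ> (b R\<^sub>B N\<^sub>A R\<^sub>A N\<^sub>B)\<close>, applied after \<open>\<tau>\<close>:
  moving \<open>b\<close> and \<open>ab\<close> through \<open>\<xi>\<close> turns \<open>\<xi>\<close> into \<open>\<xi>' \<circ> t\<close>.\<close>

abbreviation "RNRN x \<equiv> fo RB (fo NA (fo RA (fo NB x)))"

lemma H_tau:
  "fa RA (Comp T (fa F (fa N'B (fa RB (ab x)))) (b.cmp_N (RNRN x))) \<cdot> src.tau x
   = \<xi>' (fo N'A (fo R'A (fo N'B x))) \<cdot> t (fo R'A (fo N'A (fo R'A (fo N'B x)))) \<cdot> fa C (fa RA (ab x))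
       \<cdot> fa C (\<eta>A (fo RA (fo NB x))) \<cdot> \<xi>i (fo NB x) \<cdot> fa RA (fa NB (\<eta>B x))"
proof -
  let ?ys = "fo N'A (fo R'A (fo N'B x))"
  have RA_b_nat: "fa R'A (fa N'B (fa RB (ab x))) \<cdot> fa RA (b.cmp_N (RNRN x))
      = fa RA (b.cmp_N (fo R'B ?ys)) \<cdot> fa RA (fa NB (fa RB (ab x)))"
    by (rule functor_square[OF src.A_adj.R_functor b.cmp_nat[of "fa RB (ab x)", symmetric], simplified])
  have "fa RA (Comp T (fa F (fa N'B (fa RB (ab x)))) (b.cmp_N (RNRN x))) \<cdot> src.tau x
      = fa R'A (fa N'B (fa RB (ab x))) \<cdot> fa RA (b.cmp_N (RNRN x)) \<cdot> \<xi> (fo NA (fo RA (fo NB x)))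
        \<cdot> fa C (\<eta>A (fo RA (fo NB x))) \<cdot> \<xi>i (fo NB x) \<cdot> fa RA (fa NB (\<eta>B x))"
    by (simp add: src.A_adj.R_comp mk_tau_def cat_assoc)
  also have "\<dots> = fa RA (b.cmp_N (fo R'B ?ys)) \<cdot> fa RA (fa NB (fa RB (ab x))) \<cdot> \<xi> (fo NA (fo RA (fo NB x)))
        \<cdot> fa C (\<eta>A (fo RA (fo NB x))) \<cdot> \<xi>i (fo NB x) \<cdot> fa RA (fa NB (\<eta>B x))"
    by (subst src.A_reassoc[OF RA_b_nat]) (simp_all add: cat_assoc)
  also have "\<dots> = fa RA (b.cmp_N (fo R'B ?ys)) \<cdot> \<xi> (fo F ?ys) \<cdot> fa C (fa RA (ab x))
        \<cdot> fa C (\<eta>A (fo RA (fo NB x))) \<cdot> \<xi>i (fo NB x) \<cdot> fa RA (fa NB (\<eta>B x))"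
    by (subst src.A_reassoc[OF src.xi_nat[of "ab x", simplified, symmetric]]) (simp_all add: cat_assoc)
  also have "\<dots> = \<xi>' ?ys \<cdot> t (fo R'A ?ys) \<cdot> fa C (fa RA (ab x))
        \<cdot> fa C (\<eta>A (fo RA (fo NB x))) \<cdot> \<xi>i (fo NB x) \<cdot> fa RA (fa NB (\<eta>B x))"
    by (subst src.A_reassoc[OF xi_compat]) (simp_all add: cat_assoc)
  finally show ?thesis .
qed

lemma tau_compat:
  "fa RA (Comp T (fa F (fa N'B (fa RB (ab x)))) (b.cmp_N (RNRN x))) \<cdot> src.tau x
   = tgt.tau x \<cdot> fa RA (b.cmp_N x)"
proof -
  let ?ys = "fo N'A (fo R'A (fo N'B x))"
  have C_ab_unit: "fa C (fa RA (ab x)) \<cdot> fa C (\<eta>A (fo RA (fo NB x)))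
      = fa C (\<eta>'A (fo R'A (fo N'B x))) \<cdot> fa C (fa RA (b.cmp_N x))"
    by (rule functor_square[OF src.C_functor ab_unit]) simp_all
  have "fa RA (Comp T (fa F (fa N'B (fa RB (ab x)))) (b.cmp_N (RNRN x))) \<cdot> src.tau x
      = \<xi>' ?ys \<cdot> t (fo R'A ?ys) \<cdot> fa C (\<eta>'A (fo R'A (fo N'B x)))
        \<cdot> fa C (fa RA (b.cmp_N x)) \<cdot> \<xi>i (fo NB x) \<cdot> fa RA (fa NB (\<eta>B x))"
    unfolding H_tau by (subst src.A_reassoc[OF C_ab_unit]) (simp_all add: cat_assoc)
  also have "\<dots> = \<xi>' ?ys \<cdot> fa C' (\<eta>'A (fo R'A (fo N'B x))) \<cdot> t (fo R'A (fo N'B x))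
        \<cdot> fa C (fa RA (b.cmp_N x)) \<cdot> \<xi>i (fo NB x) \<cdot> fa RA (fa NB (\<eta>B x))"
    by (subst src.A_reassoc[OF t_nat[of "\<eta>'A (fo R'A (fo N'B x))", simplified]]) (simp_all add: cat_assoc)
  also have "\<dots> = tgt.tau x \<cdot> fa RA (b.cmp_N x)"
    by (simp add: xi_inv_unit_compat mk_tau_def cat_assoc)
  finally show ?thesis .
qed

theorem pre_torsor_morphism:
  "pretorsor_mor A B T T' NA RA \<epsilon>A NB RB \<epsilon>B src.tau N'A R'A \<eta>'A N'B R'B \<eta>'B tgt.tau F"
  unfolding pretorsor_mor_def Let_def
  using a.F_functor a.R_F b.R_F tau_compat[unfolded ab_def] by blast

end

theorem mainTheorem7:
  fixes A :: "('a,'am) cat" and B :: "('b,'bm) cat" and T :: "('t,'tm) cat"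
    and NA :: "('a,'am,'t,'tm) ftr" and RA :: "('t,'tm,'a,'am) ftr"
    and \<eta>A :: "'a \<Rightarrow> 'am" and \<epsilon>A :: "'t \<Rightarrow> 'tm"
    and NB :: "('b,'bm,'t,'tm) ftr" and RB :: "('t,'tm,'b,'bm) ftr"
    and \<eta>B :: "'b \<Rightarrow> 'bm" and \<epsilon>B :: "'t \<Rightarrow> 'tm"
    and C :: "('a,'am,'a,'am) ftr" and \<Delta> :: "'a \<Rightarrow> 'am" and \<epsilon> :: "'a \<Rightarrow> 'am"
    and \<xi> :: "'t \<Rightarrow> 'am" and \<xi>i :: "'t \<Rightarrow> 'am"
  assumes obj: "rarr_obj A B T NA RA \<eta>A \<epsilon>A NB RB \<eta>B \<epsilon>B C \<Delta> \<epsilon> \<xi>"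
    and inv: "inverse_nt A \<xi> \<xi>i"
  shows "pre_torsor A B T NA RA \<eta>A \<epsilon>A NB RB \<eta>B \<epsilon>B (mk_tau A C NA RA \<eta>A NB \<eta>B \<xi> \<xi>i) \<and>
    (\<forall>(T' :: ('s,'sm) cat) N'A R'A \<eta>'A \<epsilon>'A N'B R'B \<eta>'B \<epsilon>'B C' \<Delta>' \<epsilon>' \<xi>' \<xi>'i F t.
       rarr_obj A B T' N'A R'A \<eta>'A \<epsilon>'A N'B R'B \<eta>'B \<epsilon>'B C' \<Delta>' \<epsilon>' \<xi>' \<longrightarrow>
       inverse_nt A \<xi>' \<xi>'i \<longrightarrow>
       rarr_mor A B T T' RA NB RB \<epsilon>B C \<Delta> \<epsilon> \<xi> R'A N'B R'B \<eta>'B C' \<Delta>' \<epsilon>' \<xi>' F t \<longrightarrow>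
       pretorsor_mor A B T T' NA RA \<epsilon>A NB RB \<epsilon>B (mk_tau A C NA RA \<eta>A NB \<eta>B \<xi> \<xi>i)
         N'A R'A \<eta>'A N'B R'B \<eta>'B (mk_tau A C' N'A R'A \<eta>'A N'B \<eta>'B \<xi>' \<xi>'i) F)"
proof (intro conjI allI impI)
  interpret src: rarr_object A B T NA RA \<eta>A \<epsilon>A NB RB \<eta>B \<epsilon>B C \<Delta> \<epsilon> \<xi> \<xi>i
    by (rule rarr_objectI[OF obj inv])
  show "pre_torsor A B T NA RA \<eta>A \<epsilon>A NB RB \<eta>B \<epsilon>B (mk_tau A C NA RA \<eta>A NB \<eta>B \<xi> \<xi>i)"
    by (rule src.pre_torsor_tau)
next
  fix T' :: "('s,'sm) cat" and N'A R'A \<eta>'A \<epsilon>'A N'B R'B \<eta>'B \<epsilon>'B C' \<Delta>' \<epsilon>' \<xi>' \<xi>'i F t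
  assume obj': "rarr_obj A B T' N'A R'A \<eta>'A \<epsilon>'A N'B R'B \<eta>'B \<epsilon>'B C' \<Delta>' \<epsilon>' \<xi>'"
    and inv': "inverse_nt A \<xi>' \<xi>'i"
    and mor: "rarr_mor A B T T' RA NB RB \<epsilon>B C \<Delta> \<epsilon> \<xi> R'A N'B R'B \<eta>'B C' \<Delta>' \<epsilon>' \<xi>' F t"
  interpret rarr_morphism A B T NA RA \<eta>A \<epsilon>A NB RB \<eta>B \<epsilon>B C \<Delta> \<epsilon> \<xi> \<xi>i
      T' N'A R'A \<eta>'A \<epsilon>'A N'B R'B \<eta>'B \<epsilon>'B C' \<Delta>' \<epsilon>' \<xi>' \<xi>'i F t
    by (intro rarr_morphism.intro rarr_morphism_axioms.intro rarr_objectI obj inv obj' inv' mor)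
  show "pretorsor_mor A B T T' NA RA \<epsilon>A NB RB \<epsilon>B (mk_tau A C NA RA \<eta>A NB \<eta>B \<xi> \<xi>i)
      N'A R'A \<eta>'A N'B R'B \<eta>'B (mk_tau A C' N'A R'A \<eta>'A N'B \<eta>'B \<xi>' \<xi>'i) F"
    by (rule pre_torsor_morphism)
qed

end
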